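(* Let $1\le k\le n-1$ and let $\lambda$ be a Young diagram fitting inside the $k\times(n-k)$ rectangle. Then $$X_\lambda\,\mathbf 1=w_\lambda(\mathbf 1)+\sum_{\varepsilon\in E}f_\varepsilon\,\varepsilon$$ for some rational functions $f_\varepsilon\in\mathbb Q(v)$ each of which has a zero of order $\ge1$ at $v=0$.
   Context: Let $\mathcal H$ be the Hecke algebra of $S_n$ over $\mathbb Q(v)$, generated by $T_1,\dots,T_{n-1}$ with braid relations and $(T_i-v)(T_i+v^{-1})=0$. Let $E$ be the set of sequences of $n$ signs $\pm$ with exactly $k$ pluses; $S_n$ acts on $E$ by permuting positions ($s_i$ swaps entries $i,i+1$). Let $M=\bigoplus_{\varepsilon\in E}\mathbb Q(v)\varepsilon$ with $\mathcal H$-action: $T_i\varepsilon=s_i\varepsilon$ if $(\varepsilon_i,\varepsilon_{i+1})=(+,-)$; $T_i\varepsilon=-v^{-1}\varepsilon$ if $(\varepsilon_i,\varepsilon_{i+1})\in\{(+,+),(-,-)\}$; $T_i\varepsilon=s_i\varepsilon+(v-v^{-1})\varepsilon$ if $(\varepsilon_i,\varepsilon_{i+1})=(-,+)$. Let $\mathbf 1=(+^k,-^{n-k})$. For a Young diagram $\lambda$ with rows $\lambda_1\ge\dots\ge\lambda_\ell>0$ ($\ell\le k$, $\lambda_1\le n-k$) and boxes $(i,j)$, $1\le j\le\lambda_i$: $w_\lambda=P_\ell\cdots P_1\in S_n$ with $P_i=s_{k+\lambda_i-i}s_{k+\lambda_i-i-1}\cdots s_{k+1-i}$; $r_{ij}=\max(r_{i,j+1},r_{i+1,j})+1$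 with $r_{ij}=0$ for $(i,j)\notin\lambda$; $[r]=(v^r-v^{-r})/(v-v^{-1})$; $X_\lambda=Q_\ell\cdots Q_1$ with $Q_i=\prod_{j=\lambda_i}^{1}\bigl(T_{k+j-i}-v^{r_{ij}}/[r_{ij}]\bigr)$, factors ordered from $j=\lambda_i$ (leftmost) to $j=1$ (rightmost). *)

theory Defs
  imports "HOL-Computational_Algebra.Polynomial" "HOL-Computational_Algebra.Fraction_Field"
begin

type_synonym qv = "rat poly fract"

definition vv :: qv where "vv = Fract [:0, 1:] 1"

definition vanishes_at_0 :: "qv \<Rightarrow> bool" where
  "vanishes_at_0 f \<longleftrightarrow> (\<exists>p q. q \<noteq> 0 \<and> poly q 0 \<noteq> 0 \<and> poly p 0 = 0 \<and> f = Fract p q)"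

definition qint :: "nat \<Rightarrow> qv" where
  "qint r = (vv ^ r - inverse vv ^ r) / (vv - inverse vv)"

text \<open>Sign sequences: True = +, False = -. Positions are 1..n (list index p-1).\<close>
definition seqs :: "nat \<Rightarrow> nat \<Rightarrow> bool list set" where
  "seqs n k = {e. length e = n \<and> length (filter id e) = k}"

definition one_seq :: "nat \<Rightarrow> nat \<Rightarrow> bool list" where
  "one_seq n k = replicate k True @ replicate (n - k) False"

definition s_act :: "nat \<Rightarrow> bool list \<Rightarrow> bool list" where
  "s_act i e = e[i - 1 := e ! i, i := e ! (i - 1)]"

text \<open>Vectors of M are functions from sequences to Q(v); the basis vector of e.\<close>
definition bvec :: "bool list \<Rightarrow> bool list \<Rightarrow> qv" where
  "bvec e = (\<lambda>d. if d = e then 1 else 0)"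

definition T_basis :: "nat \<Rightarrow> bool list \<Rightarrow> bool list \<Rightarrow> qv" where
  "T_basis i e =
     (if e ! (i - 1) \<and> \<not> e ! i then bvec (s_act i e)
      else if e ! (i - 1) = e ! i then (\<lambda>d. - inverse vv * bvec e d)
      else (\<lambda>d. bvec (s_act i e) d + (vv - inverse vv) * bvec e d))"

definition T_act :: "nat \<Rightarrow> nat \<Rightarrow> nat \<Rightarrow> (bool list \<Rightarrow> qv) \<Rightarrow> bool list \<Rightarrow> qv" where
  "T_act n k i x = (\<lambda>d. \<Sum>e\<in>seqs n k. x e * T_basis i e d)"

definition young_in_rect :: "nat \<Rightarrow> nat \<Rightarrow> nat list \<Rightarrow> bool" where
  "young_in_rect n k lam \<longleftrightarrow> sorted_wrt (\<ge>) lam \<and> (\<forall>x\<in>set lam. 0 < x \<and> x \<le> n - k)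
      \<and> length lam \<le> k"

definition in_diag :: "nat list \<Rightarrow> nat \<Rightarrow> nat \<Rightarrow> bool" where
  "in_diag lam i j \<longleftrightarrow> 1 \<le> i \<and> i \<le> length lam \<and> 1 \<le> j \<and> j \<le> lam ! (i - 1)"

function rr :: "nat list \<Rightarrow> nat \<Rightarrow> nat \<Rightarrow> nat" where
  "rr lam i j = (if in_diag lam i j then max (rr lam i (j + 1)) (rr lam (i + 1) j) + 1 else 0)"
  by auto
termination
proof (relation "measure (\<lambda>(lam, i, j). length lam + sum_list lam + 1 - (i + j))", goal_cases)
  case 1 then show ?case by simp
next
  case (2 lam i j)
  then have "lam ! (i - 1) \<le> sum_list lam"
    by (intro member_le_sum_list) (auto simp: in_diag_def)
  with 2 show ?case by (auto simp: in_diag_def)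
next
  case (3 lam i j)
  then have "lam ! (i - 1) \<le> sum_list lam"
    by (intro member_le_sum_list) (auto simp: in_diag_def)
  with 3 show ?case by (auto simp: in_diag_def)
qed

text \<open>Boxes listed in order of application to a vector:
  Q_1 first (i = 1 first); within Q_i the rightmost factor j = 1 first.\<close>
definition boxes :: "nat list \<Rightarrow> (nat \<times> nat) list" where
  "boxes lam = concat (map (\<lambda>i. map (\<lambda>j. (i, j)) [1..<lam ! (i - 1) + 1]) [1..<length lam + 1])"

definition w_act :: "nat \<Rightarrow> nat list \<Rightarrow> bool list \<Rightarrow> bool list" where
  "w_act k lam e = fold (\<lambda>(i, j) e'. s_act (k + j - i) e') (boxes lam) e"

definition X_act :: "nat \<Rightarrow> nat \<Rightarrow> nat list \<Rightarrow> (bool list \<Rightarrow> qv) \<Rightarrow> bool list \<Rightarrow> qv" where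
  "X_act n k lam x = fold (\<lambda>(i, j) y.
      (let r = rr lam i j in (\<lambda>d. T_act n k (k + j - i) y d - vv ^ r / qint r * y d)))
     (boxes lam) x"

end

theory Submission
  imports Defs
begin

text \<open>
  The operator X_lambda applies one factor T_t - v^r/[r] per box (i, j), with site t = k + j - i
  and r = r_ij, and v^r/[r] has a zero of order 2r - 1 at v = 0. Taking the boxes row by row, the
  plus signs of 1 move right one place at a time along a path ending in w_lambda(1); at every box
  the current sequence w has (+, -) at the two swapped positions, so T_t sends w to s_t w with
  coefficient 1.

  The remaining coefficients are controlled by a potential. A position where a sequence e differs
  from w is charged with how far the swaps still to come can carry the sign of e there, to the
  left for a plus and to the right for a minus; the invariant is that the coefficient of e, minus
  that of w, vanishes at v = 0 to order at least one more than the total charge of e. A factor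
  loses an order of vanishing (through the eigenvalue -v^-1 of T_t) only where it also lowers the
  charge, and the term v^r/[r] does no harm because the two charges at box (i, j) are bounded by
  its arm and by r_{i+1,j}, both smaller than r_ij. After the last box no swaps remain, all charges
  vanish, and every coefficient other than that of w_lambda(1) vanishes at v = 0.
\<close>

section \<open>Order of vanishing at v = 0\<close>

definition regular_at_0 :: "qv \<Rightarrow> bool" where
  "regular_at_0 f \<longleftrightarrow> (\<exists>p q. poly q 0 \<noteq> 0 \<and> f = Fract p q)"

definition v_order_ge :: "nat \<Rightarrow> qv \<Rightarrow> bool" where
  "v_order_ge m f \<longleftrightarrow> (\<exists>g. regular_at_0 g \<and> f = vv ^ m * g)"

lemma regular_at_0_Fract: "poly q 0 \<noteq> 0 \<Longrightarrow> regular_at_0 (Fract p q)"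
  unfolding regular_at_0_def by blast

lemma regular_at_0_add:
  assumes "regular_at_0 f" "regular_at_0 g"
  shows "regular_at_0 (f + g)"
proof -
  obtain p q p' q' where "poly q 0 \<noteq> 0" "f = Fract p q" "poly q' 0 \<noteq> 0" "g = Fract p' q'"
    using assms unfolding regular_at_0_def by blast
  moreover have "q \<noteq> 0" "q' \<noteq> 0"
    using calculation by auto
  ultimately have "poly (q * q') 0 \<noteq> 0 \<and> f + g = Fract (p * q' + p' * q) (q * q')"
    by auto
  then show ?thesis
    unfolding regular_at_0_def by blast
qed

lemma regular_at_0_mult:
  assumes "regular_at_0 f" "regular_at_0 g"
  shows "regular_at_0 (f * g)"
proof -
  obtain p q p' q' where "poly q 0 \<noteq> 0" "f = Fract p q" "poly q' 0 \<noteq> 0" "g = Fract p' q'"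
    using assms unfolding regular_at_0_def by blast
  then have "poly (q * q') 0 \<noteq> 0 \<and> f * g = Fract (p * p') (q * q')"
    by auto
  then show ?thesis
    unfolding regular_at_0_def by blast
qed

lemma regular_at_0_uminus:
  assumes "regular_at_0 f"
  shows "regular_at_0 (- f)"
proof -
  obtain p q where "poly q 0 \<noteq> 0" "f = Fract p q"
    using assms unfolding regular_at_0_def by blast
  then have "poly q 0 \<noteq> 0 \<and> - f = Fract (- p) q"
    by auto
  then show ?thesis
    unfolding regular_at_0_def by blast
qed

lemma vv_power: "vv ^ m = Fract (monom 1 m) 1"
proof (induction m)
  case (Suc m)
  have "monom (1::rat) 1 * monom 1 m = monom 1 (Suc m)"
    by (simp add: mult_monom)
  then show ?case
    using Suc by (simp add: vv_def monom_Suc mult.commute)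
qed (simp add: fract_collapse)

lemma vv_nonzero: "vv \<noteq> 0"
  by (simp add: vv_def Zero_fract_def eq_fract)

lemma vv_power_neq_1:
  assumes "0 < m"
  shows "vv ^ m \<noteq> 1"
proof
  assume "vv ^ m = 1"
  then have "Fract (monom (1::rat) m) 1 = Fract 1 1"
    by (simp add: vv_power fract_collapse)
  then have "monom (1::rat) m = 1"
    by (simp add: eq_fract)
  then show False
    using assms by (metis degree_1 degree_monom_eq one_neq_zero less_irrefl)
qed

lemma v_order_ge_0: "v_order_ge m 0"
  unfolding v_order_ge_def using regular_at_0_Fract[of 1 0] by (auto simp: fract_collapse)

lemma v_order_ge_add:
  assumes "v_order_ge m f" "v_order_ge m g"
  shows "v_order_ge m (f + g)"
proof -
  obtain a b where "regular_at_0 a" "f = vv ^ m * a" "regular_at_0 b" "g = vv ^ m * b"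
    using assms unfolding v_order_ge_def by blast
  then have "regular_at_0 (a + b) \<and> f + g = vv ^ m * (a + b)"
    by (simp add: regular_at_0_add distrib_left)
  then show ?thesis
    unfolding v_order_ge_def by blast
qed

lemma v_order_ge_uminus: "v_order_ge m f \<Longrightarrow> v_order_ge m (- f)"
  unfolding v_order_ge_def by (metis mult_minus_right regular_at_0_uminus)

lemma v_order_ge_diff: "v_order_ge m f \<Longrightarrow> v_order_ge m g \<Longrightarrow> v_order_ge m (f - g)"
  using v_order_ge_add[of m f "- g"] v_order_ge_uminus[of m g] by simp

lemma v_order_ge_mult:
  assumes "v_order_ge a f" "v_order_ge b g"
  shows "v_order_ge (a + b) (f * g)"
proof -
  obtain x y where "regular_at_0 x" "f = vv ^ a * x" "regular_at_0 y" "g = vv ^ b * y"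
    using assms unfolding v_order_ge_def by blast
  then have "regular_at_0 (x * y) \<and> f * g = vv ^ (a + b) * (x * y)"
    by (simp add: regular_at_0_mult power_add ac_simps)
  then show ?thesis
    unfolding v_order_ge_def by blast
qed

lemma v_order_ge_mono:
  assumes "v_order_ge m f" "m' \<le> m"
  shows "v_order_ge m' f"
proof -
  obtain g where g: "regular_at_0 g" "f = vv ^ m * g"
    using assms(1) unfolding v_order_ge_def by blast
  then have "f = vv ^ m' * (vv ^ (m - m') * g)"
    using assms(2) by (simp flip: mult.assoc power_add)
  moreover have "regular_at_0 (vv ^ (m - m') * g)"
    using g regular_at_0_Fract[of 1] by (simp add: vv_power regular_at_0_mult)
  ultimately show ?thesis
    unfolding v_order_ge_def by blast
qed

lemma v_order_ge_vv_power: "v_order_ge m (vv ^ m)"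
  unfolding v_order_ge_def using regular_at_0_Fract[of 1 1] by (auto simp: fract_collapse)

lemma v_order_ge_inverse_vv: "v_order_ge (Suc m) f \<Longrightarrow> v_order_ge m (inverse vv * f)"
  unfolding v_order_ge_def using vv_nonzero by (auto simp: field_simps)

lemma v_order_ge_1_imp_vanishes_at_0:
  assumes "v_order_ge 1 f"
  shows "vanishes_at_0 f"
proof -
  obtain p q where "poly q 0 \<noteq> 0" "f = vv * Fract p q"
    using assms unfolding v_order_ge_def regular_at_0_def by auto
  then have "q \<noteq> 0 \<and> poly q 0 \<noteq> 0 \<and> poly ([:0, 1:] * p) 0 = 0 \<and> f = Fract ([:0, 1:] * p) q"
    by (auto simp: vv_def)
  then show ?thesis
    unfolding vanishes_at_0_def by blast
qed

lemma quotient_of_inverse_diffs: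
  fixes x y :: "'a :: field"
  assumes "x \<noteq> 0" "y \<noteq> 0" "x * x \<noteq> 1" "y * y \<noteq> 1"
  shows "y / ((y - inverse y) / (x - inverse x)) = y * y / x * ((x * x - 1) / (y * y - 1))"
proof -
  have "x - inverse x = (x * x - 1) / x" "y - inverse y = (y * y - 1) / y"
    using assms by (simp_all add: field_simps)
  then show ?thesis
    using assms by (simp add: field_simps)
qed

lemma qint_coeff_eq:
  assumes "1 \<le> r"
  shows "vv ^ r / qint r = vv ^ (2 * r - 1) * ((vv * vv - 1) / (vv ^ (2 * r) - 1))"
proof -
  have square: "vv ^ (2 * r) = vv ^ r * vv ^ r"
    by (simp add: mult_2 power_add)
  have "vv * vv \<noteq> 1" "vv ^ r * vv ^ r \<noteq> 1"
    using vv_power_neq_1[of 2] vv_power_neq_1[of "2 * r"] assms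
    by (simp_all add: power2_eq_square square)
  moreover have "vv ^ r * vv ^ r / vv = vv ^ (2 * r - 1)"
  proof -
    have "vv ^ r * vv ^ r = vv * vv ^ (2 * r - 1)"
      using assms by (simp add: mult_2 flip: power_add power_Suc)
    then show ?thesis
      using vv_nonzero by simp
  qed
  ultimately show ?thesis
    unfolding qint_def power_inverse square
    using quotient_of_inverse_diffs[of vv "vv ^ r"] vv_nonzero by simp
qed

lemma v_order_ge_qint_coeff:
  assumes "1 \<le> r"
  shows "v_order_ge (2 * r - 1) (vv ^ r / qint r)"
proof -
  have "(vv * vv - 1) / (vv ^ (2 * r) - 1) = Fract (monom 1 2 - 1) (monom 1 (2 * r) - 1)"
    unfolding vv_power power2_eq_square[symmetric] One_fract_def by simp
  moreover have "poly (monom (1::rat) (2 * r) - 1) 0 \<noteq> 0"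
    using assms by (simp add: poly_monom power_0_left)
  ultimately have "regular_at_0 ((vv * vv - 1) / (vv ^ (2 * r) - 1))"
    by (simp add: regular_at_0_Fract)
  then show ?thesis
    unfolding qint_coeff_eq[OF assms] v_order_ge_def by blast
qed

section \<open>The generators on sign sequences\<close>

lemma length_s_act [simp]: "length (s_act t e) = length e"
  by (simp add: s_act_def)

lemma nth_s_act:
  assumes "1 \<le> t" "t < length e" "q < length e"
  shows "s_act t e ! q = (if q = t - 1 then e ! t else if q = t then e ! (t - 1) else e ! q)"
  using assms by (auto simp: s_act_def nth_list_update)

lemma s_act_s_act:
  assumes "1 \<le> t" "t < length e"
  shows "s_act t (s_act t e) = e"
  by (rule nth_equalityI) (use assms in \<open>auto simp: nth_s_act\<close>)

lemma length_seqs: "e \<in> seqs n k \<Longrightarrow> length e = n"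
  by (simp add: seqs_def)

lemma finite_seqs: "finite (seqs n k)"
proof (rule finite_subset)
  show "seqs n k \<subseteq> {xs. set xs \<subseteq> UNIV \<and> length xs = n}" by (auto simp: seqs_def)
  show "finite {xs. set xs \<subseteq> (UNIV :: bool set) \<and> length xs = n}"
    by (rule finite_lists_length_eq) simp
qed

lemma s_act_in_seqs:
  assumes "e \<in> seqs n k" "1 \<le> t" "t < n"
  shows "s_act t e \<in> seqs n k"
proof -
  have "mset (s_act t e) = mset e"
    unfolding s_act_def using assms by (intro mset_swap) (auto simp: seqs_def)
  then have "length (filter id (s_act t e)) = length (filter id e)"
    by (metis mset_filter size_mset)
  then show ?thesis using assms(1) by (simp add: seqs_def)
qed

lemma sum_bvec: "finite S \<Longrightarrow> (\<Sum>e\<in>S. x e * bvec e d) = (if d \<in> S then x d else 0)"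
  unfolding bvec_def by (simp add: if_distrib cong: if_cong)

lemma T_basis_eq:
  "T_basis t e d =
     (if e ! (t - 1) \<noteq> e ! t \<and> d = s_act t e then 1 else 0) +
     (if d = e then (if e ! (t - 1) = e ! t then - inverse vv
                     else if e ! (t - 1) then 0 else vv - inverse vv) else 0)"
  unfolding T_basis_def bvec_def by auto

lemma T_act_in_seqs:
  assumes d: "d \<in> seqs n k" and t: "1 \<le> t" "t < n"
  shows "T_act n k t x d =
    (if d ! (t - 1) = d ! t then - inverse vv * x d
     else if d ! (t - 1) then x (s_act t d)
     else x (s_act t d) + (vv - inverse vv) * x d)"
proof -
  have len: "length d = n" using d by (rule length_seqs)
  have swap: "s_act t d ! (t - 1) = d ! t" "s_act t d ! t = d ! (t - 1)"
    using t len by (auto simp: nth_s_act)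
  have "d = s_act t e \<longleftrightarrow> e = s_act t d" if "e \<in> seqs n k" for e
    using s_act_s_act[of t e] s_act_s_act[of t d] t len length_seqs[OF that] by metis
  then have "T_act n k t x d =
      (\<Sum>e\<in>seqs n k. if e = s_act t d then x e * (if e ! (t - 1) \<noteq> e ! t then 1 else 0) else 0)
    + (\<Sum>e\<in>seqs n k. if e = d then x e * (if e ! (t - 1) = e ! t then - inverse vv
                                          else if e ! (t - 1) then 0 else vv - inverse vv) else 0)"
    unfolding T_act_def T_basis_eq distrib_left sum.distrib
    by (intro arg_cong2[where f = "(+)"] sum.cong) auto
  also have "\<dots> = x (s_act t d) * (if d ! t \<noteq> d ! (t - 1) then 1 else 0)
      + x d * (if d ! (t - 1) = d ! t then - inverse vv
               else if d ! (t - 1) then 0 else vv - inverse vv)"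
    using d s_act_in_seqs[OF d t] finite_seqs swap by simp
  finally show ?thesis by (auto simp: algebra_simps)
qed

lemma T_act_notin_seqs:
  assumes d: "d \<notin> seqs n k" and t: "1 \<le> t" "t < n"
  shows "T_act n k t x d = 0"
  unfolding T_act_def
proof (intro sum.neutral ballI)
  fix e assume e: "e \<in> seqs n k"
  then have "d \<noteq> e" "d \<noteq> s_act t e" using d s_act_in_seqs[OF e t] by auto
  then show "x e * T_basis t e d = 0" unfolding T_basis_eq by simp
qed

section \<open>Leading terms along a product of factors\<close>

(* Sites are 1-based and list indices 0-based: the swap at site t exchanges indices t - 1 and t. *)
fun drift_left :: "nat list \<Rightarrow> nat \<Rightarrow> nat" where
  "drift_left [] q = 0"
| "drift_left (t # ts) q = (if t = q then Suc (drift_left ts (q - 1)) else drift_left ts q)"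

fun drift_right :: "nat list \<Rightarrow> nat \<Rightarrow> nat" where
  "drift_right [] q = 0"
| "drift_right (t # ts) q = (if t = Suc q then Suc (drift_right ts (Suc q)) else drift_right ts q)"

lemma drift_left_append:
  "drift_left (xs @ ys) q = drift_left xs q + drift_left ys (q - drift_left xs q)"
  by (induction xs arbitrary: q) auto

lemma drift_right_append:
  "drift_right (xs @ ys) q = drift_right xs q + drift_right ys (q + drift_right xs q)"
  by (induction xs arbitrary: q) auto

lemma drift_left_upt_below: "q < a \<Longrightarrow> drift_left [a..<b] q = 0"
proof (induction "b - a" arbitrary: a)
  case (Suc m)
  then show ?case by (simp add: upt_rec)
qed simp

lemma drift_left_upt: "drift_left [a..<b] q = (if a \<le> q \<and> q < b then 1 else 0)"
proof (induction "b - a" arbitrary: a)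
  case (Suc m)
  then have upt: "[a..<b] = a # [Suc a..<b]" by (simp add: upt_rec)
  show ?case
  proof (cases "a = q")
    case True
    then have "drift_left [Suc a..<b] (q - 1) = 0" by (intro drift_left_upt_below) (use Suc in auto)
    then show ?thesis using upt True Suc by auto
  next
    case False
    then show ?thesis using upt Suc(1)[of "Suc a"] Suc(2) by auto
  qed
qed simp

lemma drift_right_upt: "Suc q \<le> b \<Longrightarrow> drift_right [Suc q..<b] q = b - Suc q"
proof (induction "b - Suc q" arbitrary: q)
  case (Suc m)
  then have "[Suc q..<b] = Suc q # [Suc (Suc q)..<b]" by (simp add: upt_rec)
  with Suc show ?case by auto
qed simp

lemma drift_right_eq_0: "\<forall>t\<in>set ts. t \<le> q \<Longrightarrow> drift_right ts q = 0"
  by (induction ts) auto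

definition mismatch_weight :: "nat list \<Rightarrow> bool list \<Rightarrow> bool list \<Rightarrow> nat \<Rightarrow> nat" where
  "mismatch_weight ts w e q =
     (if e ! q \<and> \<not> w ! q then drift_left ts q else if \<not> e ! q \<and> w ! q then drift_right ts q else 0)"

definition potential :: "nat \<Rightarrow> nat list \<Rightarrow> bool list \<Rightarrow> bool list \<Rightarrow> nat" where
  "potential n ts w e = (\<Sum>q<n. mismatch_weight ts w e q)"

lemma potential_self [simp]: "potential n ts w w = 0"
  by (simp add: potential_def mismatch_weight_def)

lemma potential_Nil [simp]: "potential n [] w e = 0"
  by (simp add: potential_def mismatch_weight_def)

(* Only the charges at t - 1 and t change; the identity is arranged to avoid truncated
   subtraction. *)
lemma potential_step:
  assumes t: "1 \<le> t" "t < n" and w: "length w = n" "w ! (t - 1)" "\<not> w ! t"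
    and agree: "\<And>q. q < n \<Longrightarrow> q \<noteq> t - 1 \<Longrightarrow> q \<noteq> t \<Longrightarrow> e' ! q = e ! q"
  shows "potential n (t # ts) w e + (if e' ! (t - 1) then drift_left ts (t - 1) else 0)
           + (if \<not> e' ! t then drift_right ts t else 0)
       = potential n ts (s_act t w) e' + (if \<not> e ! (t - 1) then Suc (drift_right ts t) else 0)
           + (if e ! t then Suc (drift_left ts (t - 1)) else 0)"
proof -
  let ?P = "{t - 1, t}"
  have P: "?P \<subseteq> {..<n}" "t - 1 \<noteq> t" using t by auto
  have split: "potential n ts' w' e''
      = mismatch_weight ts' w' e'' (t - 1) + mismatch_weight ts' w' e'' t
        + (\<Sum>q\<in>{..<n} - ?P. mismatch_weight ts' w' e'' q)" for ts' w' e''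
    unfolding potential_def sum.subset_diff[OF P(1) finite_lessThan] using P(2) by simp
  have "mismatch_weight (t # ts) w e q = mismatch_weight ts (s_act t w) e' q"
    if "q \<in> {..<n} - ?P" for q
    using that t w agree[of q] by (auto simp: mismatch_weight_def nth_s_act)
  then have "(\<Sum>q\<in>{..<n} - ?P. mismatch_weight (t # ts) w e q)
      = (\<Sum>q\<in>{..<n} - ?P. mismatch_weight ts (s_act t w) e' q)"
    by (rule sum.cong[OF refl])
  moreover have "s_act t w ! (t - 1) = w ! t" "s_act t w ! t = w ! (t - 1)"
    using t w by (auto simp: nth_s_act)
  ultimately show ?thesis
    unfolding split[of "t # ts"] split[of ts] using t w by (simp add: mismatch_weight_def)
qed

definition hecke_step :: "nat \<Rightarrow> nat \<Rightarrow> nat \<times> nat \<Rightarrow> (bool list \<Rightarrow> qv) \<Rightarrow> bool list \<Rightarrow> qv" where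
  "hecke_step n k = (\<lambda>(t, r) x d. T_act n k t x d - vv ^ r / qint r * x d)"

definition has_leading_term :: "nat \<Rightarrow> nat \<Rightarrow> nat list \<Rightarrow> (bool list \<Rightarrow> qv) \<Rightarrow> bool list \<Rightarrow> bool" where
  "has_leading_term n k ts x w \<longleftrightarrow> w \<in> seqs n k \<and> (\<forall>d. d \<notin> seqs n k \<longrightarrow> x d = 0) \<and>
     (\<forall>d\<in>seqs n k. v_order_ge (Suc (potential n ts w d)) (x d - bvec w d))"

context
  fixes n k t r :: nat and ts :: "nat list" and x :: "bool list \<Rightarrow> qv" and w :: "bool list"
  assumes t: "1 \<le> t" "t < n" and w: "w ! (t - 1)" "\<not> w ! t" and r: "1 \<le> r"
    and bound: "drift_left ts (t - 1) + drift_right ts t \<le> 2 * r - 2"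
    and x: "has_leading_term n k (t # ts) x w"
begin

private lemma w_seqs: "w \<in> seqs n k"
  using x by (simp add: has_leading_term_def)

private lemma correction_bound:
  "e \<in> seqs n k \<Longrightarrow> v_order_ge (Suc (potential n (t # ts) w e)) (x e - bvec w e)"
  using x by (simp add: has_leading_term_def)

private lemma coeff_bound_mult:
  "e \<in> seqs n k \<Longrightarrow> m \<le> 2 * r - 1 + Suc (potential n (t # ts) w e) \<Longrightarrow>
     v_order_ge m (vv ^ r / qint r * (x e - bvec w e))"
  using v_order_ge_mono[OF v_order_ge_mult[OF v_order_ge_qint_coeff[OF r] correction_bound]] by simp

private lemma swapped_w: "\<not> s_act t w ! (t - 1)" "s_act t w ! t"
  using t w length_seqs[OF w_seqs] by (auto simp: nth_s_act)

private lemma potential_change: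
  assumes d: "d \<in> seqs n k"
  shows "potential n (t # ts) w d + (if d ! (t - 1) then drift_left ts (t - 1) else 0)
           + (if \<not> d ! t then drift_right ts t else 0)
       = potential n ts (s_act t w) d + (if \<not> d ! (t - 1) then Suc (drift_right ts t) else 0)
           + (if d ! t then Suc (drift_left ts (t - 1)) else 0)" (is ?same)
    and "potential n (t # ts) w (s_act t d) + (if d ! (t - 1) then drift_left ts (t - 1) else 0)
           + (if \<not> d ! t then drift_right ts t else 0)
       = potential n ts (s_act t w) d + (if \<not> d ! t then Suc (drift_right ts t) else 0)
           + (if d ! (t - 1) then Suc (drift_left ts (t - 1)) else 0)" (is ?swapped)
proof -
  note step = potential_step[OF t length_seqs[OF w_seqs] w]
  show ?same
    by (rule step) simp
  show ?swapped
    using step[of d "s_act t d" ts] t length_seqs[OF d] by (simp add: nth_s_act)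
qed

private lemma correction_step_equal:
  assumes d: "d \<in> seqs n k" and equal: "d ! (t - 1) = d ! t"
  shows "v_order_ge (Suc (potential n ts (s_act t w) d))
           (hecke_step n k (t, r) x d - bvec (s_act t w) d)"
proof -
  let ?u = "potential n ts (s_act t w) d"
  have "d \<noteq> w" "d \<noteq> s_act t w"
    using equal w swapped_w by auto
  then have eq: "hecke_step n k (t, r) x d - bvec (s_act t w) d
      = - (inverse vv * (x d - bvec w d)) - vv ^ r / qint r * (x d - bvec w d)"
    using equal T_act_in_seqs[OF d t, of x] by (simp add: hecke_step_def bvec_def algebra_simps)
  have pot: "potential n (t # ts) w d = Suc ?u"
    using potential_change(1)[OF d] equal by auto
  then have "v_order_ge (Suc ?u) (inverse vv * (x d - bvec w d))"
    using v_order_ge_inverse_vv correction_bound[OF d] by simp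
  moreover have "v_order_ge (Suc ?u) (vv ^ r / qint r * (x d - bvec w d))"
    using coeff_bound_mult[OF d] pot by simp
  ultimately show ?thesis
    unfolding eq by (intro v_order_ge_diff v_order_ge_uminus)
qed

private lemma correction_step_plus_minus:
  assumes d: "d \<in> seqs n k" and plus_minus: "d ! (t - 1)" "\<not> d ! t"
  shows "v_order_ge (Suc (potential n ts (s_act t w) d))
           (hecke_step n k (t, r) x d - bvec (s_act t w) d)"
proof -
  let ?u = "potential n ts (s_act t w) d"
  have "d \<noteq> s_act t w" "s_act t d \<noteq> w"
    using plus_minus w swapped_w length_seqs[OF d] t by (auto simp: nth_s_act)
  then have eq: "hecke_step n k (t, r) x d - bvec (s_act t w) d
      = (x (s_act t d) - bvec w (s_act t d)) - vv ^ r / qint r * (x d - bvec w d)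
        - vv ^ r / qint r * bvec w d"
    using plus_minus T_act_in_seqs[OF d t, of x]
    by (simp add: hecke_step_def bvec_def algebra_simps)
  have pot: "potential n (t # ts) w (s_act t d) = Suc (Suc ?u)"
    "?u = potential n (t # ts) w d + drift_left ts (t - 1) + drift_right ts t"
    using potential_change[OF d] plus_minus by simp_all
  have "v_order_ge (Suc ?u) (x (s_act t d) - bvec w (s_act t d))"
    using v_order_ge_mono[OF correction_bound[OF s_act_in_seqs[OF d t]]] pot(1) by simp
  moreover have "v_order_ge (Suc ?u) (vv ^ r / qint r * (x d - bvec w d))"
    using coeff_bound_mult[OF d] pot(2) bound r by simp
  moreover have "v_order_ge (Suc ?u) (vv ^ r / qint r * bvec w d)"
  proof (cases "d = w")
    case True
    then have "?u = drift_left ts (t - 1) + drift_right ts t"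
      using pot(2) by simp
    then show ?thesis
      using True v_order_ge_mono[OF v_order_ge_qint_coeff[OF r]] bound r by (simp add: bvec_def)
  qed (simp add: bvec_def v_order_ge_0)
  ultimately show ?thesis
    unfolding eq by (rule v_order_ge_diff[OF v_order_ge_diff])
qed

private lemma correction_step_minus_plus:
  assumes d: "d \<in> seqs n k" and minus_plus: "\<not> d ! (t - 1)" "d ! t"
  shows "v_order_ge (Suc (potential n ts (s_act t w) d))
           (hecke_step n k (t, r) x d - bvec (s_act t w) d)"
proof -
  let ?u = "potential n ts (s_act t w) d" and ?c = "x d - bvec w d"
  have "d \<noteq> w"
    using minus_plus w by auto
  moreover have "bvec w (s_act t d) = bvec (s_act t w) d"
    using s_act_s_act[of t d] s_act_s_act[of t w] t length_seqs[OF d] length_seqs[OF w_seqs]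
    by (auto simp: bvec_def)
  ultimately have eq: "hecke_step n k (t, r) x d - bvec (s_act t w) d
      = (x (s_act t d) - bvec w (s_act t d)) + (vv * ?c - inverse vv * ?c - vv ^ r / qint r * ?c)"
    using minus_plus T_act_in_seqs[OF d t, of x]
    by (simp add: hecke_step_def bvec_def algebra_simps)
  have pot: "potential n (t # ts) w (s_act t d) = ?u"
    "potential n (t # ts) w d = Suc (Suc (?u + drift_left ts (t - 1) + drift_right ts t))"
    using potential_change[OF d] minus_plus by simp_all
  have c: "v_order_ge (Suc (Suc ?u)) ?c"
    using v_order_ge_mono[OF correction_bound[OF d]] pot(2) by simp
  have "v_order_ge (Suc ?u) (x (s_act t d) - bvec w (s_act t d))"
    using correction_bound[OF s_act_in_seqs[OF d t]] pot(1) by simp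
  moreover have "v_order_ge (Suc ?u) (vv * ?c)"
    using v_order_ge_mono[OF v_order_ge_mult[OF v_order_ge_vv_power[of 1] c]] by simp
  moreover have "v_order_ge (Suc ?u) (inverse vv * ?c)"
    using v_order_ge_inverse_vv[OF c] .
  moreover have "v_order_ge (Suc ?u) (vv ^ r / qint r * ?c)"
    using coeff_bound_mult[OF d] pot(2) by simp
  ultimately show ?thesis
    unfolding eq by (rule v_order_ge_add[OF _ v_order_ge_diff[OF v_order_ge_diff]])
qed

lemma has_leading_term_step: "has_leading_term n k ts (hecke_step n k (t, r) x) (s_act t w)"
proof -
  have "hecke_step n k (t, r) x d = 0" if "d \<notin> seqs n k" for d
    using that x T_act_notin_seqs[OF that t] by (simp add: has_leading_term_def hecke_step_def)
  moreover have "v_order_ge (Suc (potential n ts (s_act t w) d))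
      (hecke_step n k (t, r) x d - bvec (s_act t w) d)" if d: "d \<in> seqs n k" for d
    using correction_step_equal[OF d] correction_step_plus_minus[OF d]
      correction_step_minus_plus[OF d] by blast
  ultimately show ?thesis
    using s_act_in_seqs[OF w_seqs t] by (simp add: has_leading_term_def)
qed

end

fun admissible :: "nat \<Rightarrow> bool list \<Rightarrow> (nat \<times> nat) list \<Rightarrow> bool" where
  "admissible n w [] \<longleftrightarrow> True"
| "admissible n w ((t, r) # steps) \<longleftrightarrow>
     1 \<le> t \<and> t < n \<and> w ! (t - 1) \<and> \<not> w ! t \<and> 1 \<le> r \<and>
     drift_left (map fst steps) (t - 1) + drift_right (map fst steps) t \<le> 2 * r - 2 \<and>
     admissible n (s_act t w) steps"

lemma has_leading_term_fold:
  "admissible n w steps \<Longrightarrow> has_leading_term n k (map fst steps) x w \<Longrightarrow>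
     has_leading_term n k [] (fold (hecke_step n k) steps x) (fold s_act (map fst steps) w)"
proof (induction steps arbitrary: w x)
  case (Cons step steps)
  obtain t r where step: "step = (t, r)" by fastforce
  show ?case
    using Cons.prems has_leading_term_step[of t n w r "map fst steps" k x] Cons.IH
    unfolding step by simp
qed simp

lemma has_leading_term_expansion:
  assumes "has_leading_term n k [] x w"
  shows "\<exists>f. (\<forall>e\<in>seqs n k. vanishes_at_0 (f e)) \<and>
           x = (\<lambda>d. bvec w d + (\<Sum>e\<in>seqs n k. f e * bvec e d))"
proof (intro exI conjI)
  show "\<forall>e\<in>seqs n k. vanishes_at_0 (x e - bvec w e)"
    using assms by (auto simp: has_leading_term_def intro: v_order_ge_1_imp_vanishes_at_0)
  show "x = (\<lambda>d. bvec w d + (\<Sum>e\<in>seqs n k. (x e - bvec w e) * bvec e d))"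
    unfolding sum_bvec[OF finite_seqs] using assms by (auto simp: has_leading_term_def bvec_def)
qed

section \<open>The factors of X_lambda and their hook bounds\<close>

declare rr.simps [simp del]

lemma rr_ge_Suc_below: "in_diag lam i j \<Longrightarrow> rr lam i j \<ge> Suc (rr lam (i + 1) j)"
  by (subst rr.simps) simp

lemma rr_ge_Suc_right: "in_diag lam i j \<Longrightarrow> rr lam i j \<ge> Suc (rr lam i (j + 1))"
  by (subst rr.simps) simp

lemma rr_eq_0: "\<not> in_diag lam i j \<Longrightarrow> rr lam i j = 0"
  by (subst rr.simps) simp

lemma rr_ge_arm: "in_diag lam i j \<Longrightarrow> rr lam i j \<ge> lam ! (i - 1) - j + 1"
proof (induction "lam ! (i - 1) - j" arbitrary: j)
  case 0
  then show ?case using rr_ge_Suc_right[OF 0(2)] by simp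
next
  case (Suc m)
  then have "in_diag lam i (j + 1)" by (auto simp: in_diag_def)
  moreover have "m = lam ! (i - 1) - (j + 1)" using Suc(2) by simp
  ultimately have "rr lam i (j + 1) \<ge> lam ! (i - 1) - (j + 1) + 1" using Suc(1) by blast
  then show ?case using rr_ge_Suc_right[OF Suc(3)] Suc(2) by simp
qed

definition row_len :: "nat list \<Rightarrow> nat \<Rightarrow> nat" where
  "row_len lam i = (if 1 \<le> i \<and> i \<le> length lam then lam ! (i - 1) else 0)"

lemma row_len_antimono:
  assumes "young_in_rect n k lam" "1 \<le> i'" "i' \<le> i"
  shows "row_len lam i \<le> row_len lam i'"
proof (cases "i \<le> length lam \<and> i' < i")
  case True
  have "sorted_wrt (\<ge>) lam"
    using assms(1) by (simp add: young_in_rect_def)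
  moreover have "i' - 1 < i - 1" "i - 1 < length lam"
    using True assms(2) by auto
  ultimately have "lam ! (i - 1) \<le> lam ! (i' - 1)"
    by (rule sorted_wrt_nth_less)
  then show ?thesis
    using True assms(2) by (simp add: row_len_def)
next
  case False
  then have "i' = i \<or> length lam < i"
    using assms(3) by auto
  then show ?thesis
    by (auto simp: row_len_def)
qed

lemma young_length_le: "young_in_rect n k lam \<Longrightarrow> length lam \<le> k"
  by (simp add: young_in_rect_def)

lemma young_row_le: "young_in_rect n k lam \<Longrightarrow> 1 \<le> i \<Longrightarrow> i \<le> length lam \<Longrightarrow> lam ! (i - 1) \<le> n - k"
  unfolding young_in_rect_def by (metis Suc_le_eq diff_less le_less_trans less_one nth_mem not_le)

definition row_steps :: "nat \<Rightarrow> nat list \<Rightarrow> nat \<Rightarrow> nat \<Rightarrow> (nat \<times> nat) list" where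
  "row_steps k lam i j = map (\<lambda>j'. (k + j' - i, rr lam i j')) [j..<lam ! (i - 1) + 1]"

definition rows_steps :: "nat \<Rightarrow> nat list \<Rightarrow> nat \<Rightarrow> (nat \<times> nat) list" where
  "rows_steps k lam i = concat (map (\<lambda>i'. row_steps k lam i' 1) [i..<length lam + 1])"

lemma rows_steps_eq_boxes: "rows_steps k lam 1 = map (\<lambda>(i, j). (k + j - i, rr lam i j)) (boxes lam)"
  by (simp add: rows_steps_def row_steps_def boxes_def map_concat comp_def)

lemma X_act_eq_fold: "X_act n k lam x = fold (hecke_step n k) (rows_steps k lam 1) x"
  unfolding rows_steps_eq_boxes fold_map X_act_def
  by (simp add: comp_def split_def hecke_step_def Let_def)

lemma w_act_eq_fold: "w_act k lam e = fold s_act (map fst (rows_steps k lam 1)) e"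
  unfolding rows_steps_eq_boxes w_act_def map_map fold_map
  by (simp add: comp_def split_def)

lemma rows_steps_Cons:
  "i \<le> length lam \<Longrightarrow> rows_steps k lam i = row_steps k lam i 1 @ rows_steps k lam (Suc i)"
  unfolding rows_steps_def by (simp add: upt_rec)

lemma rows_steps_Nil: "length lam < i \<Longrightarrow> rows_steps k lam i = []"
  unfolding rows_steps_def by simp

lemma row_steps_Cons:
  "j \<le> lam ! (i - 1) \<Longrightarrow>
     row_steps k lam i j = (k + j - i, rr lam i j) # row_steps k lam i (Suc j)"
  unfolding row_steps_def by (simp add: upt_rec)

lemma sites_row_steps:
  assumes "i \<le> k"
  shows "map fst (row_steps k lam i j) = [k + j - i..<k + (lam ! (i - 1) + 1) - i]"
proof -
  obtain c where k: "k = i + c"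
    using assms le_Suc_ex by blast
  have "map fst (row_steps k lam i j) = map (\<lambda>j'. j' + c) [j..<lam ! (i - 1) + 1]"
    by (simp add: row_steps_def k add.commute del: upt_Suc)
  also have "\<dots> = [j + c..<lam ! (i - 1) + 1 + c]"
    by (rule nth_equalityI) (simp_all del: upt_Suc)
  finally show ?thesis
    by (simp add: k add.commute del: upt_Suc)
qed

lemma sites_rows_steps_le:
  assumes y: "young_in_rect n k lam" and i: "1 \<le> i" and t: "t \<in> set (map fst (rows_steps k lam i))"
  shows "t \<le> k + row_len lam i - i"
proof -
  obtain i' j' where "i' \<in> set [i..<length lam + 1]" "j' \<in> set [1..<lam ! (i' - 1) + 1]"
    and "t = k + j' - i'"
    using t unfolding rows_steps_def row_steps_def by (auto simp del: upt_Suc)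
  then have i': "i \<le> i'" "i' \<le> length lam" "j' \<le> lam ! (i' - 1)" and "t = k + j' - i'"
    by auto
  moreover have "lam ! (i' - 1) \<le> row_len lam i"
    using row_len_antimono[OF y i i'(1)] i i' by (simp add: row_len_def)
  ultimately show ?thesis by linarith
qed

lemma drift_left_rows_steps:
  assumes y: "young_in_rect n k lam"
  shows "1 \<le> i \<Longrightarrow> 1 \<le> j \<Longrightarrow> drift_left (map fst (rows_steps k lam i)) (k + j - i) \<le> rr lam i j"
proof (induction "length lam + 1 - i" arbitrary: i j)
  case (Suc m)
  show ?case
  proof (cases "i \<le> length lam")
    case True
    have ik: "i \<le> k" using True young_length_le[OF y] by simp
    let ?l = "lam ! (i - 1)"
    have IH: "drift_left (map fst (rows_steps k lam (Suc i))) (k + j' - Suc i) \<le> rr lam (Suc i) j'"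
      if "1 \<le> j'" for j'
      using Suc that by simp
    have rows: "map fst (rows_steps k lam i)
        = [k + 1 - i..<k + (?l + 1) - i] @ map fst (rows_steps k lam (Suc i))"
      using rows_steps_Cons[OF True] sites_row_steps[OF ik] by simp
    show ?thesis
    proof (cases "j \<le> ?l")
      case True
      have "k + 1 - i \<le> k + j - i \<and> k + j - i < k + (?l + 1) - i"
        using True ik Suc(4) by arith
      then have "drift_left [k + 1 - i..<k + (?l + 1) - i] (k + j - i) = 1"
        by (simp only: drift_left_upt) simp
      then have "drift_left (map fst (rows_steps k lam i)) (k + j - i)
          = 1 + drift_left (map fst (rows_steps k lam (Suc i))) (k + j - Suc i)"
        unfolding rows drift_left_append by simp
      also have "\<dots> \<le> 1 + rr lam (Suc i) j" using IH[OF Suc(4)] by simp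
      also have "\<dots> \<le> rr lam i j"
        using rr_ge_Suc_below[of lam i j] True \<open>i \<le> length lam\<close> Suc(3,4) by (simp add: in_diag_def)
      finally show ?thesis .
    next
      case False
      have "\<not> (k + 1 - i \<le> k + j - i \<and> k + j - i < k + (?l + 1) - i)"
        using False ik Suc(4) by arith
      then have "drift_left [k + 1 - i..<k + (?l + 1) - i] (k + j - i) = 0"
        by (simp only: drift_left_upt) simp
      then have "drift_left (map fst (rows_steps k lam i)) (k + j - i)
          = drift_left (map fst (rows_steps k lam (Suc i))) (k + Suc j - Suc i)"
        unfolding rows drift_left_append by simp
      also have "\<dots> \<le> rr lam (Suc i) (Suc j)" using IH[of "Suc j"] by simp
      also have "rr lam (Suc i) (Suc j) = 0"
      proof (rule rr_eq_0)
        show "\<not> in_diag lam (Suc i) (Suc j)"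
        proof
          assume "in_diag lam (Suc i) (Suc j)"
          then have "Suc j \<le> row_len lam (Suc i)"
            by (simp add: in_diag_def row_len_def)
          also have "\<dots> \<le> row_len lam i"
            using row_len_antimono[OF y Suc(3)] by simp
          finally show False
            using False \<open>i \<le> length lam\<close> Suc(3) by (simp add: row_len_def)
        qed
      qed
      finally show ?thesis by simp
    qed
  qed (simp add: rows_steps_Nil)
qed (simp add: rows_steps_Nil)

lemma drift_bound:
  assumes y: "young_in_rect n k lam" and i: "1 \<le> i" "i \<le> length lam"
    and j: "1 \<le> j" "j \<le> lam ! (i - 1)"
    and ts: "ts = map fst (row_steps k lam i (Suc j) @ rows_steps k lam (Suc i))"
  shows "drift_left ts (k + j - i - 1) + drift_right ts (k + j - i) \<le> 2 * rr lam i j - 2"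
proof -
  let ?l = "lam ! (i - 1)"
  have ik: "i \<le> k" using i young_length_le[OF y] by simp
  have diag: "in_diag lam i j" using i j by (simp add: in_diag_def)
  have ts: "ts = [Suc (k + j - i)..<k + (?l + 1) - i] @ map fst (rows_steps k lam (Suc i))"
    using sites_row_steps[OF ik, of lam "Suc j"] ik ts by (simp add: Suc_diff_le)
  have "drift_left [Suc (k + j - i)..<k + (?l + 1) - i] (k + j - i - 1) = 0"
    by (rule drift_left_upt_below) simp
  then have "drift_left ts (k + j - i - 1)
      = drift_left (map fst (rows_steps k lam (Suc i))) (k + j - Suc i)"
    unfolding ts drift_left_append by simp
  also have "\<dots> \<le> rr lam (Suc i) j"
    using drift_left_rows_steps[OF y _ j(1), of "Suc i"] by simp
  also have "\<dots> \<le> rr lam i j - 1"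
    using rr_ge_Suc_below[OF diag] by simp
  finally have left: "drift_left ts (k + j - i - 1) \<le> rr lam i j - 1" .
  have "drift_right (map fst (rows_steps k lam (Suc i))) (k + row_len lam i - i) = 0"
  proof (rule drift_right_eq_0, rule ballI)
    fix t assume "t \<in> set (map fst (rows_steps k lam (Suc i)))"
    then have "t \<le> k + row_len lam (Suc i) - Suc i"
      using sites_rows_steps_le[OF y] by simp
    moreover have "row_len lam (Suc i) \<le> row_len lam i"
      using row_len_antimono[OF y i(1)] by simp
    ultimately show "t \<le> k + row_len lam i - i" by simp
  qed
  moreover have "k + j - i + (?l - j) = k + row_len lam i - i"
    using ik i j by (simp add: row_len_def)
  ultimately have "drift_right ts (k + j - i) = ?l - j"
    unfolding ts drift_right_append using drift_right_upt[of "k + j - i" "k + (?l + 1) - i"] ik j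
    by simp
  also have "\<dots> \<le> rr lam i j - 1"
    using rr_ge_arm[OF diag] by simp
  finally show ?thesis
    using left by simp
qed

section \<open>The path of the plus signs\<close>

(* Before box (i, j) is processed, the i'-th plus sign from the right has moved one place to the
   right for every box of row i' processed so far. *)
definition moved :: "nat list \<Rightarrow> nat \<Rightarrow> nat \<Rightarrow> nat \<Rightarrow> nat" where
  "moved lam i j i' = (if i' < i then row_len lam i' else if i' = i then j - 1 else 0)"

definition plus_positions :: "nat \<Rightarrow> nat list \<Rightarrow> nat \<Rightarrow> nat \<Rightarrow> nat set" where
  "plus_positions k lam i j = (\<lambda>i'. k + moved lam i j i' - i') ` {1..k}"

definition indicator_list :: "nat \<Rightarrow> nat set \<Rightarrow> bool list" where
  "indicator_list n P = map (\<lambda>q. q \<in> P) [0..<n]"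

lemma length_indicator_list [simp]: "length (indicator_list n P) = n"
  by (simp add: indicator_list_def)

lemma nth_indicator_list: "q < n \<Longrightarrow> indicator_list n P ! q = (q \<in> P)"
  by (simp add: indicator_list_def)

lemma s_act_indicator_list:
  assumes t: "1 \<le> t" "t < n" and P: "t - 1 \<in> P" "t \<notin> P"
  shows "s_act t (indicator_list n P) = indicator_list n (P - {t - 1} \<union> {t})"
  by (rule nth_equalityI) (use t P in \<open>auto simp: nth_s_act nth_indicator_list\<close>)

lemma plus_positions_other_rows:
  assumes y: "young_in_rect n k lam" and i: "1 \<le> i" "i \<le> length lam"
    and j: "1 \<le> j" "j \<le> lam ! (i - 1)"
    and i': "i' \<in> {1..k}" "i' \<noteq> i"
  shows "k + moved lam i j i' - i' \<notin> {k + j - i - 1, k + j - i}"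
    "moved lam i (Suc j) i' = moved lam i j i'"
proof -
  have ik: "i \<le> k" using i young_length_le[OF y] by simp
  show "k + moved lam i j i' - i' \<notin> {k + j - i - 1, k + j - i}"
  proof (cases "i' < i")
    case True
    have "row_len lam i \<le> row_len lam i'"
      using row_len_antimono[OF y, of i' i] True i' by simp
    then have "j \<le> moved lam i j i'"
      using True i j by (simp add: moved_def row_len_def)
    then show ?thesis using True ik by auto
  next
    case False
    then have "moved lam i j i' = 0" "i < i'" "i' \<le> k"
      using i' by (auto simp: moved_def)
    then show ?thesis using ik j(1) by auto
  qed
  show "moved lam i (Suc j) i' = moved lam i j i'"
    using i' by (simp add: moved_def)
qed

lemma plus_positions_step:
  assumes y: "young_in_rect n k lam" and i: "1 \<le> i" "i \<le> length lam"
    and j: "1 \<le> j" "j \<le> lam ! (i - 1)"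
  shows "k + j - i - 1 \<in> plus_positions k lam i j" "k + j - i \<notin> plus_positions k lam i j"
    "plus_positions k lam i (Suc j) = plus_positions k lam i j - {k + j - i - 1} \<union> {k + j - i}"
proof -
  have ik: "i \<le> k" using i young_length_le[OF y] by simp
  have own: "k + moved lam i j i - i = k + j - i - 1" "k + moved lam i (Suc j) i - i = k + j - i"
    using j(1) ik by (auto simp: moved_def)
  have iK: "i \<in> {1..k}" using i ik by simp
  note others = plus_positions_other_rows[OF y i j]
  show "k + j - i - 1 \<in> plus_positions k lam i j"
    unfolding plus_positions_def using own(1) iK by (rule image_eqI[OF sym])
  show "k + j - i \<notin> plus_positions k lam i j"
  proof
    assume "k + j - i \<in> plus_positions k lam i j"
    then obtain i' where i': "i' \<in> {1..k}" "k + j - i = k + moved lam i j i' - i'"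
      unfolding plus_positions_def by blast
    show False
    proof (cases "i' = i")
      case True
      then show False using i'(2) own(1) j(1) ik by simp
    next
      case False
      then show False using others(1)[OF i'(1)] i'(2) by simp
    qed
  qed
  show "plus_positions k lam i (Suc j) = plus_positions k lam i j - {k + j - i - 1} \<union> {k + j - i}"
  proof (intro set_eqI iffI)
    fix q assume "q \<in> plus_positions k lam i (Suc j)"
    then obtain i' where i': "i' \<in> {1..k}" "q = k + moved lam i (Suc j) i' - i'"
      unfolding plus_positions_def by blast
    show "q \<in> plus_positions k lam i j - {k + j - i - 1} \<union> {k + j - i}"
    proof (cases "i' = i")
      case False
      then have "q = k + moved lam i j i' - i'" "q \<noteq> k + j - i - 1"
        using others[OF i'(1)] i'(2) by auto
      then show ?thesis
        unfolding plus_positions_def using i'(1) by blast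
    qed (use i'(2) own(2) in simp)
  next
    fix q assume q: "q \<in> plus_positions k lam i j - {k + j - i - 1} \<union> {k + j - i}"
    show "q \<in> plus_positions k lam i (Suc j)"
    proof (cases "q = k + j - i")
      case True
      then have "k + moved lam i (Suc j) i - i = q"
        using own(2) by simp
      then show ?thesis
        unfolding plus_positions_def using iK by (rule image_eqI[OF sym])
    next
      case False
      then obtain i' where i': "i' \<in> {1..k}" "q = k + moved lam i j i' - i'" "q \<noteq> k + j - i - 1"
        using q unfolding plus_positions_def by blast
      then have "i' \<noteq> i" using own(1) by auto
      then have "q = k + moved lam i (Suc j) i' - i'"
        using others(2)[OF i'(1)] i'(2) by simp
      then show ?thesis
        unfolding plus_positions_def using i'(1) by blast
    qed
  qed
qed

lemma plus_positions_next_row: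
  assumes "1 \<le> i" "i \<le> length lam"
  shows "plus_positions k lam i (lam ! (i - 1) + 1) = plus_positions k lam (Suc i) 1"
proof -
  have "moved lam i (lam ! (i - 1) + 1) i' = moved lam (Suc i) 1 i'" for i'
    using assms by (cases "i' < i"; cases "i' = i") (auto simp: moved_def row_len_def)
  then show ?thesis
    unfolding plus_positions_def by simp
qed

lemma indicator_list_plus_positions_1_1:
  assumes "k \<le> n"
  shows "indicator_list n (plus_positions k lam 1 1) = one_seq n k"
proof -
  have "moved lam 1 1 i' = 0" for i'
    by (simp add: moved_def row_len_def)
  then have "plus_positions k lam 1 1 = (\<lambda>i'. k - i') ` {1..k}"
    unfolding plus_positions_def by simp
  also have "\<dots> = {..<k}"
  proof (intro set_eqI iffI)
    fix q assume "q \<in> {..<k}"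
    then have "k - q \<in> {1..k}" "q = k - (k - q)" by auto
    then show "q \<in> (\<lambda>i'. k - i') ` {1..k}" by blast
  qed auto
  finally show ?thesis
    unfolding one_seq_def indicator_list_def
    by (intro nth_equalityI) (use assms in \<open>auto simp: nth_append\<close>)
qed

definition path_state :: "nat \<Rightarrow> nat \<Rightarrow> nat list \<Rightarrow> nat \<Rightarrow> nat \<Rightarrow> bool list" where
  "path_state n k lam i j = indicator_list n (plus_positions k lam i j)"

lemma site_bounds:
  assumes y: "young_in_rect n k lam" and k: "1 \<le> k" "k \<le> n - 1"
    and i: "1 \<le> i" "i \<le> length lam" and j: "1 \<le> j" "j \<le> lam ! (i - 1)"
  shows "1 \<le> k + j - i" "k + j - i < n"
  using i j k young_length_le[OF y] young_row_le[OF y i] by linarith+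

lemma admissible_row:
  assumes y: "young_in_rect n k lam" and k: "1 \<le> k" "k \<le> n - 1"
    and i: "1 \<le> i" "i \<le> length lam"
    and rest: "admissible n (path_state n k lam i (lam ! (i - 1) + 1)) (rows_steps k lam (Suc i))"
  shows "1 \<le> j \<Longrightarrow> j \<le> lam ! (i - 1) + 1 \<Longrightarrow>
    admissible n (path_state n k lam i j) (row_steps k lam i j @ rows_steps k lam (Suc i))"
proof (induction "lam ! (i - 1) + 1 - j" arbitrary: j)
  case 0
  then show ?case using rest by (simp add: row_steps_def)
next
  case (Suc m)
  then have j: "1 \<le> j" "j \<le> lam ! (i - 1)" by auto
  define t where "t = k + j - i"
  have t: "1 \<le> t" "t < n"
    unfolding t_def using site_bounds[OF y k i j] by auto
  note P = plus_positions_step[OF y i j, folded t_def]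
  have "path_state n k lam i j ! (t - 1)" "\<not> path_state n k lam i j ! t"
    using P(1,2) t by (simp_all add: path_state_def nth_indicator_list)
  moreover have "s_act t (path_state n k lam i j) = path_state n k lam i (Suc j)"
    unfolding path_state_def P(3) using s_act_indicator_list[OF t P(1,2)] .
  moreover have "1 \<le> rr lam i j"
    using rr_ge_Suc_right[of lam i j] i j by (simp add: in_diag_def)
  moreover have "admissible n (path_state n k lam i (Suc j))
      (row_steps k lam i (Suc j) @ rows_steps k lam (Suc i))"
    using Suc by simp
  ultimately show ?case
    using t drift_bound[OF y i j refl] unfolding row_steps_Cons[OF j(2)] t_def by simp
qed

lemma admissible_rows_steps:
  assumes y: "young_in_rect n k lam" and k: "1 \<le> k" "k \<le> n - 1"
  shows "1 \<le> i \<Longrightarrow> i \<le> length lam + 1 \<Longrightarrow> admissible n (path_state n k lam i 1) (rows_steps k lam i)"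
proof (induction "length lam + 1 - i" arbitrary: i)
  case 0
  then show ?case by (simp add: rows_steps_Nil)
next
  case (Suc m)
  then have i: "1 \<le> i" "i \<le> length lam" by auto
  have "admissible n (path_state n k lam (Suc i) 1) (rows_steps k lam (Suc i))"
    using Suc by simp
  then show ?case
    using admissible_row[OF y k i, of 1] plus_positions_next_row[OF i]
    unfolding rows_steps_Cons[OF i(2)] path_state_def by simp
qed

theorem mainTheorem4:
  fixes n k :: nat and lam :: "nat list"
  assumes "1 \<le> k" and "k \<le> n - 1"
    and "young_in_rect n k lam"
  shows "\<exists>f :: bool list \<Rightarrow> qv. (\<forall>e\<in>seqs n k. vanishes_at_0 (f e)) \<and>
           X_act n k lam (bvec (one_seq n k)) =
             (\<lambda>d. bvec (w_act k lam (one_seq n k)) d + (\<Sum>e\<in>seqs n k. f e * bvec e d))"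
proof -
  let ?one = "one_seq n k" and ?steps = "rows_steps k lam 1"
  have one: "?one \<in> seqs n k"
    using assms(2) by (simp add: seqs_def one_seq_def)
  have "admissible n ?one ?steps"
    using admissible_rows_steps[OF assms(3,1,2), of 1]
      indicator_list_plus_positions_1_1[of k n lam] assms(2)
    by (simp add: path_state_def)
  moreover have "has_leading_term n k (map fst ?steps) (bvec ?one) ?one"
    using one by (auto simp: has_leading_term_def bvec_def v_order_ge_0)
  ultimately have "has_leading_term n k [] (X_act n k lam (bvec ?one)) (w_act k lam ?one)"
    unfolding X_act_eq_fold w_act_eq_fold by (rule has_leading_term_fold)
  then show ?thesis
    by (rule has_leading_term_expansion)
qed

end
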